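(* Let $X$ be a topological quandle. (1) If $X$ has the discrete topology, then $\bar H^n_Q(X)=0$ and $\bar H^n_W(X)=\bar C^n_W(X)$ for $n\ge1$ and $W=R,D$, and $\bar H^0_Q(X)=\bar H^0_R(X)=\bar C^0_R(X)$. (2) If $X$ has the indiscrete topology, then $\bar H^n_W(X)\cong H^{n+1}_W(X)$ for $n\ge0$ and $W=R,D,Q$. (3) If the underlying quandle structure of $X$ is trivial ($x\triangleright y=x$ for all $x,y$), then $\bar H^n_W(X)=\bar C^n_W(X)$ for $W=R,D,Q$.
   Context: A quandle is a set with a binary operation $\triangleright$ such that $x\triangleright x=x$, each $\beta_y(x)=x\triangleright y$ is bijective, and $(x\triangleright y)\triangleright z=(x\triangleright z)\triangleright(y\triangleright z)$. A topological quandle is a topological space with a continuous quandle operation such that every $\beta_y$ is a homeomorphism. For a topological quandle $X$, $\bar C^R_n(X)$ is the free abelian group on singular $n$-simplices $\sigma:\Delta^n\to X$ modulo identifying two simplices with the same ordered vertex tuple; thus it is free abelian on the tuples $\sigma_{[x_1,\dots,x_{n+1}]}$ ($x_i=\sigma(e_{i-1})$) that are vertex tuples of some singular $n$-simplex. Its boundary is $\partial_n\sigma_{[x_1,\dots,x_{n+1}]}=\sum_{i=2}^{n+1}(-1)^i\big(\sigma_{[x_1,\dots,\hat{x_i},\dots,x_{n+1}]}-\sigma_{[x_1\triangleright x_i,\dots,x_{i-1}\triangleright x_i,x_{i+1},\dots,x_{n+1}]}\big)$. For $n\ge1$, $\bar C^D_n(X)$ is generated by $\sigma_{[x_1,\dots,x_{n+1}]}$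 with $x_i=x_{i+1}$ for some $i\in\{1,\dots,n\}$, and $\bar C^D_0(X)=0$; $\bar C^Q_n(X)=\bar C^R_n(X)/\bar C^D_n(X)$. The cochain groups are $\bar C^n_W(X)=\mathrm{Hom}(\bar C^W_n(X),\mathbb{Z})$ with $\delta^n f=f\circ\partial_{n+1}$, and $\bar H^n_W(X)$ is the resulting cohomology. The rack complex $C^R_n(X)$ is free abelian on $X^n$ with boundary $\partial^R_n(x_1,\dots,x_n)=\sum_{i=2}^n(-1)^i[(x_1,\dots,\hat{x_i},\dots,x_n)-(x_1\triangleright x_i,\dots,x_{i-1}\triangleright x_i,x_{i+1},\dots,x_n)]$; $C^D_n(X)$ is generated by tuples with $x_i=x_{i+1}$ for some $i\in\{1,\dots,n-1\}$; $C^Q_n=C^R_n/C^D_n$; $H^n_W(X)$ is the cohomology of $\mathrm{Hom}(C^W_*(X),\mathbb{Z})$. *)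

theory Defs
  imports "HOL-Homology.Homology" "HOL-Algebra.Free_Abelian_Groups"
    "HOL-Algebra.Elementary_Groups" "HOL-Algebra.Coset"
begin

text \<open>A quandle on the set S with operation op (op x y stands for x tri y).\<close>
definition quandle :: "'a set \<Rightarrow> ('a \<Rightarrow> 'a \<Rightarrow> 'a) \<Rightarrow> bool" where
  "quandle S op \<longleftrightarrow>
     (\<forall>x\<in>S. \<forall>y\<in>S. op x y \<in> S) \<and>
     (\<forall>x\<in>S. op x x = x) \<and>
     (\<forall>y\<in>S. bij_betw (\<lambda>x. op x y) S S) \<and>
     (\<forall>x\<in>S. \<forall>y\<in>S. \<forall>z\<in>S. op (op x y) z = op (op x z) (op y z))"

definition topological_quandle :: "'a topology \<Rightarrow> ('a \<Rightarrow> 'a \<Rightarrow> 'a) \<Rightarrow> bool" where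
  "topological_quandle X op \<longleftrightarrow>
     quandle (topspace X) op \<and>
     continuous_map (prod_topology X X) X (\<lambda>(x, y). op x y) \<and>
     (\<forall>y\<in>topspace X. homeomorphic_map X X (\<lambda>x. op x y))"

text \<open>For a tuple xs = [x_1,...,x_m] and 2 <= i <= m: delete the i-th entry,
  resp. act by x_i on the entries before position i and delete x_i.\<close>
definition tuple_del :: "nat \<Rightarrow> 'a list \<Rightarrow> 'a list" where
  "tuple_del i xs = take (i - 1) xs @ drop i xs"

definition tuple_act :: "('a \<Rightarrow> 'a \<Rightarrow> 'a) \<Rightarrow> nat \<Rightarrow> 'a list \<Rightarrow> 'a list" where
  "tuple_act op i xs = map (\<lambda>x. op x (xs ! (i - 1))) (take (i - 1) xs) @ drop i xs"

text \<open>Boundary of a single tuple (same formula for the rack complex and the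
  simplicial complex; only the length/degree bookkeeping differs).\<close>
definition tuple_bd_gen :: "('a \<Rightarrow> 'a \<Rightarrow> 'a) \<Rightarrow> 'a list \<Rightarrow> 'a list \<Rightarrow>\<^sub>0 int" where
  "tuple_bd_gen op xs =
     (\<Sum>i\<in>{2..length xs}. frag_cmul ((-1) ^ i)
         (frag_of (tuple_del i xs) - frag_of (tuple_act op i xs)))"

definition tuple_bd :: "('a \<Rightarrow> 'a \<Rightarrow> 'a) \<Rightarrow> ('a list \<Rightarrow>\<^sub>0 int) \<Rightarrow> 'a list \<Rightarrow>\<^sub>0 int" where
  "tuple_bd op = frag_extend (tuple_bd_gen op)"

definition degenerate_tuple :: "'a list \<Rightarrow> bool" where
  "degenerate_tuple xs \<longleftrightarrow> (\<exists>i. Suc i < length xs \<and> xs ! i = xs ! Suc i)"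

text \<open>Vertex tuples of singular n-simplices in X (lists of length n+1).
  The i-th vertex of the standard simplex is the i-th unit vector.\<close>
definition simplex_vertex_tuples :: "'a topology \<Rightarrow> nat \<Rightarrow> 'a list set" where
  "simplex_vertex_tuples X n =
     {map (\<lambda>i. \<sigma> (\<lambda>j. if j = i then 1 else 0)) [0..<Suc n] | \<sigma>. singular_simplex n X \<sigma>}"

definition barR_gens :: "'a topology \<Rightarrow> nat \<Rightarrow> 'a list set" where
  "barR_gens X n = simplex_vertex_tuples X n"

definition R_gens :: "'a topology \<Rightarrow> nat \<Rightarrow> 'a list set" where
  "R_gens X n = {xs. length xs = n \<and> set xs \<subseteq> topspace X}"

definition chainR :: "(nat \<Rightarrow> 'a list set) \<Rightarrow> nat \<Rightarrow> ('a list \<Rightarrow>\<^sub>0 int) monoid" where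
  "chainR gens n = free_Abelian_group (gens n)"

definition chainD :: "(nat \<Rightarrow> 'a list set) \<Rightarrow> nat \<Rightarrow> ('a list \<Rightarrow>\<^sub>0 int) monoid" where
  "chainD gens n = free_Abelian_group (gens n \<inter> {xs. degenerate_tuple xs})"

definition chainQ :: "(nat \<Rightarrow> 'a list set) \<Rightarrow> nat \<Rightarrow> ('a list \<Rightarrow>\<^sub>0 int) set monoid" where
  "chainQ gens n = chainR gens n Mod carrier (chainD gens n)"

definition bdQ :: "(nat \<Rightarrow> 'a list set) \<Rightarrow> ('a \<Rightarrow> 'a \<Rightarrow> 'a) \<Rightarrow> nat
                    \<Rightarrow> ('a list \<Rightarrow>\<^sub>0 int) set \<Rightarrow> ('a list \<Rightarrow>\<^sub>0 int) set" where
  "bdQ gens op n A = r_coset (chainR gens (n - 1)) (carrier (chainD gens (n - 1)))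
                        (tuple_bd op (SOME a. a \<in> A))"

text \<open>Hom(G, Z) as an abelian group under pointwise addition (homomorphisms are
  taken extensional, i.e. 0 outside the carrier of G).\<close>
definition cochain_group :: "'c monoid \<Rightarrow> ('c \<Rightarrow> int) monoid" where
  "cochain_group G =
     \<lparr>carrier = {f \<in> hom G integer_group. \<forall>x. x \<notin> carrier G \<longrightarrow> f x = 0},
      monoid.mult = (\<lambda>f g x. f x + g x), one = (\<lambda>x. 0)\<rparr>"

definition coboundary_map :: "'c monoid \<Rightarrow> ('c \<Rightarrow> 'c) \<Rightarrow> ('c \<Rightarrow> int) \<Rightarrow> 'c \<Rightarrow> int" where
  "coboundary_map G bd f = (\<lambda>c. if c \<in> carrier G then f (bd c) else 0)"

text \<open>C n is the chain group in degree n, d n the boundary C n -> C (n-1).\<close>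
definition cocycles :: "(nat \<Rightarrow> 'c monoid) \<Rightarrow> (nat \<Rightarrow> 'c \<Rightarrow> 'c) \<Rightarrow> nat \<Rightarrow> ('c \<Rightarrow> int) set" where
  "cocycles C d n = {f \<in> carrier (cochain_group (C n)).
                      coboundary_map (C (Suc n)) (d (Suc n)) f = (\<lambda>x. 0)}"

definition coboundaries :: "(nat \<Rightarrow> 'c monoid) \<Rightarrow> (nat \<Rightarrow> 'c \<Rightarrow> 'c) \<Rightarrow> nat \<Rightarrow> ('c \<Rightarrow> int) set" where
  "coboundaries C d n =
     (if n = 0 then {\<lambda>x. 0}
      else coboundary_map (C n) (d n) ` carrier (cochain_group (C (n - 1))))"

definition cohomology :: "(nat \<Rightarrow> 'c monoid) \<Rightarrow> (nat \<Rightarrow> 'c \<Rightarrow> 'c) \<Rightarrow> nat \<Rightarrow> ('c \<Rightarrow> int) set monoid" where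
  "cohomology C d n =
     (cochain_group (C n))\<lparr>carrier := cocycles C d n\<rparr> Mod coboundaries C d n"

definition cohom_class :: "(nat \<Rightarrow> 'c monoid) \<Rightarrow> (nat \<Rightarrow> 'c \<Rightarrow> 'c) \<Rightarrow> nat
                            \<Rightarrow> ('c \<Rightarrow> int) \<Rightarrow> ('c \<Rightarrow> int) set" where
  "cohom_class C d n f = r_coset (cochain_group (C n)) (coboundaries C d n) f"

text \<open>"H^n = C^n": the canonical map C^n -> H^n is an isomorphism.\<close>
definition cohom_equals_cochains :: "(nat \<Rightarrow> 'c monoid) \<Rightarrow> (nat \<Rightarrow> 'c \<Rightarrow> 'c) \<Rightarrow> nat \<Rightarrow> bool" where
  "cohom_equals_cochains C d n \<longleftrightarrow>
     cohom_class C d n \<in> iso (cochain_group (C n)) (cohomology C d n)"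

abbreviation barCR where "barCR X \<equiv> chainR (barR_gens X)"
abbreviation barCD where "barCD X \<equiv> chainD (barR_gens X)"
abbreviation barCQ where "barCQ X \<equiv> chainQ (barR_gens X)"
abbreviation CR where "CR X \<equiv> chainR (R_gens X)"
abbreviation CD where "CD X \<equiv> chainD (R_gens X)"
abbreviation CQ where "CQ X \<equiv> chainQ (R_gens X)"

definition barHR where "barHR X op n = cohomology (barCR X) (\<lambda>_. tuple_bd op) n"
definition barHD where "barHD X op n = cohomology (barCD X) (\<lambda>_. tuple_bd op) n"
definition barHQ where "barHQ X op n = cohomology (barCQ X) (bdQ (barR_gens X) op) n"
definition HR where "HR X op n = cohomology (CR X) (\<lambda>_. tuple_bd op) n"
definition HD where "HD X op n = cohomology (CD X) (\<lambda>_. tuple_bd op) n"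
definition HQ where "HQ X op n = cohomology (CQ X) (bdQ (R_gens X) op) n"

end

theory Submission
  imports Defs
begin

text \<open>In the discrete case a singular simplex has connected, hence one-point, image, so its
  vertex tuple is \<open>(x, \<dots>, x)\<close> and by idempotency the two faces in each term of the boundary
  coincide. So all boundaries vanish and cohomology equals cochains; in degrees \<open>n \<ge> 1\<close> every
  generator is moreover degenerate, so the quotient complex is zero there, while no \<open>1\<close>-tuple is
  degenerate, so in degree \<open>0\<close> the quotient and rack chains agree. For a trivial quandle the two
  faces coincide for every tuple. In the indiscrete case every map into \<open>X\<close> is continuous, so
  every \<open>(n+1)\<close>-tuple is a vertex tuple: the bar complex is the rack complex shifted down by one
  degree, and the shift does not change cohomology because the rack boundary vanishes on
  \<open>1\<close>-tuples.\<close>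

lemma zero_in_cochain_group: "(\<lambda>x. 0) \<in> carrier (cochain_group G)"
  by (auto simp: cochain_group_def hom_def)

lemma one_cochain_group [simp]: "\<one>\<^bsub>cochain_group G\<^esub> = (\<lambda>x. 0)"
  by (simp add: cochain_group_def)

lemma group_cochain_group: "group (cochain_group G)"
proof (rule groupI)
  fix f g assume "f \<in> carrier (cochain_group G)" "g \<in> carrier (cochain_group G)"
  then show "f \<otimes>\<^bsub>cochain_group G\<^esub> g \<in> carrier (cochain_group G)"
    by (auto simp: cochain_group_def hom_def)
next
  fix f assume f: "f \<in> carrier (cochain_group G)"
  then have "(\<lambda>x. - f x) \<in> carrier (cochain_group G)"
    by (auto simp: cochain_group_def hom_def)
  then show "\<exists>g\<in>carrier (cochain_group G). g \<otimes>\<^bsub>cochain_group G\<^esub> f = \<one>\<^bsub>cochain_group G\<^esub>"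
    by (force simp: cochain_group_def)
qed (auto simp: cochain_group_def hom_def add.assoc)

lemma cochain_one_eq_0:
  assumes "group G" "f \<in> carrier (cochain_group G)"
  shows "f \<one>\<^bsub>G\<^esub> = 0"
  using assms hom_one[of f G integer_group] by (simp add: cochain_group_def)

lemma trivial_group_cochain_group:
  assumes "trivial_group G"
  shows "trivial_group (cochain_group G)"
proof -
  have "f = (\<lambda>x. 0)" if f: "f \<in> carrier (cochain_group G)" for f
  proof
    fix x show "f x = 0"
      using f cochain_one_eq_0[OF _ f] assms
      by (cases "x \<in> carrier G") (auto simp: trivial_group_def cochain_group_def)
  qed
  then show ?thesis
    using zero_in_cochain_group group_cochain_group by (fastforce simp: trivial_group_def)
qed

text \<open>The formula of \<^const>\<open>coboundary_map\<close>, for maps between groups of different types.\<close>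

definition cochain_pullback ::
    "('a, 'm) monoid_scheme \<Rightarrow> ('a \<Rightarrow> 'b) \<Rightarrow> ('b \<Rightarrow> int) \<Rightarrow> 'a \<Rightarrow> int" where "cochain_pullback A h f = (\<lambda>x. if x \<in> carrier A then f (h x) else 0)"

lemma cochain_pullback_in_cochain_group:
  assumes "group A" "h \<in> hom A B" "f \<in> carrier (cochain_group B)"
  shows "cochain_pullback A h f \<in> carrier (cochain_group A)"
proof -
  have "f \<in> hom B integer_group" using assms(3) by (simp add: cochain_group_def)
  then have "cochain_pullback A h f \<in> hom A integer_group"
    using assms(1,2) by (intro homI)
      (auto simp: cochain_pullback_def hom_mult group.is_monoid monoid.m_closed hom_in_carrier)
  then show ?thesis by (simp add: cochain_group_def cochain_pullback_def)
qed

lemma cochain_pullback_hom: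
  assumes "group A" "h \<in> hom A B"
  shows "cochain_pullback A h \<in> hom (cochain_group B) (cochain_group A)"
proof (rule homI)
  fix f assume "f \<in> carrier (cochain_group B)"
  then show "cochain_pullback A h f \<in> carrier (cochain_group A)"
    by (rule cochain_pullback_in_cochain_group[OF assms])
qed (auto simp: cochain_pullback_def cochain_group_def)

lemma cochain_pullback_cochain_pullback:
  assumes "f \<in> carrier (cochain_group A)" "k \<in> carrier A \<rightarrow> carrier B"
    and "\<And>x. x \<in> carrier A \<Longrightarrow> h (k x) = x"
  shows "cochain_pullback A k (cochain_pullback B h f) = f"
  using assms by (auto simp: cochain_pullback_def cochain_group_def fun_eq_iff Pi_iff)

lemma cochain_group_iso:
  assumes "group G" "group H" "G \<cong> H"
  shows "cochain_group H \<cong> cochain_group G"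
proof -
  obtain \<psi> \<phi> where iso: "group_isomorphisms G H \<psi> \<phi>"
    using assms(1,3) by (auto simp: is_iso_def group.iso_iff_group_isomorphisms)
  then have "group_isomorphisms (cochain_group H) (cochain_group G)
               (cochain_pullback G \<psi>) (cochain_pullback H \<phi>)"
    using assms(1,2) unfolding group_isomorphisms_def
    by (auto simp: cochain_pullback_hom cochain_pullback_cochain_pullback hom_in_carrier)
  then show ?thesis
    by (auto simp: is_iso_def dest: group_isomorphisms_imp_iso)
qed

definition zero_differential :: "(nat \<Rightarrow> 'c monoid) \<Rightarrow> (nat \<Rightarrow> 'c \<Rightarrow> 'c) \<Rightarrow> bool" where
  "zero_differential C d \<longleftrightarrow> (\<forall>k. \<forall>c\<in>carrier (C (Suc k)). d (Suc k) c = \<one>\<^bsub>C k\<^esub>)"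

lemma coboundary_map_trivial:
  assumes "group H" "\<And>c. c \<in> carrier G \<Longrightarrow> bd c = \<one>\<^bsub>H\<^esub>" "f \<in> carrier (cochain_group H)"
  shows "coboundary_map G bd f = (\<lambda>x. 0)"
  using assms cochain_one_eq_0[OF assms(1,3)] by (auto simp: coboundary_map_def)

lemma coboundaries_Suc_trivial:
  assumes "group (C k)" "\<And>c. c \<in> carrier (C (Suc k)) \<Longrightarrow> d (Suc k) c = \<one>\<^bsub>C k\<^esub>"
  shows "coboundaries C d (Suc k) = {\<lambda>x. 0}"
  using coboundary_map_trivial[OF assms] zero_in_cochain_group[of "C k"]
  by (auto simp: coboundaries_def)

lemma
  assumes "\<And>k. group (C k)" "zero_differential C d"
  shows cohomology_zero_differential: "cohomology C d n = cochain_group (C n) Mod {\<lambda>x. 0}"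
    and cohom_class_zero_differential: "cohom_class C d n = (\<lambda>f. {f})"
proof -
  have cobd: "coboundaries C d n = {\<lambda>x. 0}"
    using assms coboundaries_Suc_trivial[of C]
    by (cases n) (auto simp: coboundaries_def zero_differential_def)
  have "cocycles C d n = carrier (cochain_group (C n))"
    using assms coboundary_map_trivial[of "C n"] by (auto simp: cocycles_def zero_differential_def)
  then show "cohomology C d n = cochain_group (C n) Mod {\<lambda>x. 0}"
    by (simp add: cohomology_def cobd)
  show "cohom_class C d n = (\<lambda>f. {f})"
    by (auto simp: cohom_class_def cobd r_coset_def cochain_group_def)
qed

lemma group_cohomology_if_zero_differential:
  assumes "\<And>k. group (C k)" "zero_differential C d"
  shows "group (cohomology C d n)"
  unfolding cohomology_zero_differential[OF assms]
  using normal.factorgroup_is_group[OF group.one_is_normal[OF group_cochain_group]] by simp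

lemma cohom_equals_cochains_if_zero_differential:
  assumes "\<And>k. group (C k)" "zero_differential C d"
  shows "cohom_equals_cochains C d n"
proof -
  let ?G = "cochain_group (C n)"
  have rcosets: "rcosets\<^bsub>?G\<^esub> {\<lambda>x. 0} = (\<lambda>f. {f}) ` carrier ?G"
    by (auto simp: RCOSETS_def r_coset_def cochain_group_def)
  have "(\<lambda>f. {f}) \<in> hom ?G (?G Mod {\<lambda>x. 0})"
    by (rule homI) (auto simp: FactGroup_def rcosets set_mult_def)
  moreover have "bij_betw (\<lambda>f. {f}) (carrier ?G) (carrier (?G Mod {\<lambda>x. 0}))"
    by (auto simp: bij_betw_def inj_on_def FactGroup_def rcosets)
  ultimately show ?thesis
    by (simp add: cohom_equals_cochains_def cohomology_zero_differential[OF assms]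
        cohom_class_zero_differential[OF assms] iso_def)
qed

lemma trivial_cohomology_if_zero_differential:
  assumes "\<And>k. group (C k)" "zero_differential C d" "trivial_group (C n)"
  shows "trivial_group (cohomology C d n)"
proof (rule isomorphic_group_triviality1)
  show "cochain_group (C n) \<cong> cohomology C d n"
    using cohom_equals_cochains_if_zero_differential[OF assms(1,2)]
    by (auto simp: cohom_equals_cochains_def intro: is_isoI)
qed (use group_cohomology_if_zero_differential[OF assms(1,2)]
        trivial_group_cochain_group[OF assms(3)] in auto)

lemma cohomology_shift:
  assumes C: "\<And>k. C' k = C (Suc k)" and d: "\<And>k. k \<ge> 1 \<Longrightarrow> d' k = d (Suc k)"
    and "coboundaries C d 1 = {\<lambda>x. 0}"
  shows "cohomology C' d' n = cohomology C d (Suc n)"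
proof -
  have "cocycles C' d' n = cocycles C d (Suc n)"
    by (simp add: cocycles_def C d)
  moreover have "coboundaries C' d' n = coboundaries C d (Suc n)"
    using assms by (cases n) (simp_all add: coboundaries_def)
  ultimately show ?thesis by (simp add: cohomology_def C)
qed

lemma group_chainR: "group (chainR gens n)"
  by (simp add: chainR_def)

lemma group_chainD: "group (chainD gens n)"
  by (simp add: chainD_def)

lemma one_chainR [simp]: "\<one>\<^bsub>chainR gens n\<^esub> = 0"
  by (simp add: chainR_def)

lemma one_chainD [simp]: "\<one>\<^bsub>chainD gens n\<^esub> = 0"
  by (simp add: chainD_def)

lemma zero_in_carrier_chainR: "0 \<in> carrier (chainR gens n)"
  by (simp add: chainR_def)

lemma subgroup_chainD: "subgroup (carrier (chainD gens n)) (chainR gens n)"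
proof (rule group.subgroupI[OF group_chainR])
  show "carrier (chainD gens n) \<noteq> {}"
    using carrier_free_Abelian_group_iff[of 0] by (force simp: chainD_def)
qed (auto simp: chainD_def chainR_def dest: subsetD[OF keys_add])

lemma normal_chainD: "carrier (chainD gens n) \<lhd> chainR gens n"
proof -
  interpret comm_group "chainR gens n"
    by (simp add: chainR_def abelian_free_Abelian_group)
  show ?thesis by (rule subgroup_imp_normal[OF subgroup_chainD])
qed

lemma group_chainQ: "group (chainQ gens n)"
  unfolding chainQ_def by (rule normal.factorgroup_is_group[OF normal_chainD])

lemma trivial_group_chainQ:
  assumes "gens k \<subseteq> {xs. degenerate_tuple xs}"
  shows "trivial_group (chainQ gens k)"
proof -
  have "chainQ gens k = chainR gens k Mod carrier (chainR gens k)"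
    using assms by (simp add: chainQ_def chainD_def chainR_def Int_absorb2)
  moreover have "rcosets\<^bsub>chainR gens k\<^esub> carrier (chainR gens k) = {carrier (chainR gens k)}"
    using subgroup.rcos_const[OF group.subgroup_self[OF group_chainR] group_chainR]
      zero_in_carrier_chainR[of gens k]
    unfolding RCOSETS_def by auto
  ultimately show ?thesis
    using group_chainQ[of gens k] by (simp add: trivial_group_def FactGroup_def)
qed

lemma chainQ_iso_chainR:
  assumes "gens k \<inter> {xs. degenerate_tuple xs} = {}"
  shows "chainQ gens k \<cong> chainR gens k"
proof -
  have "carrier (chainD gens k) = {0}"
    using assms by (auto simp: chainD_def)
  then have "chainQ gens k = chainR gens k Mod {\<one>\<^bsub>chainR gens k\<^esub>}"
    by (simp add: chainQ_def)
  then show ?thesis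
    using is_isoI[OF group.trivial_factor_iso[OF group_chainR]] by simp
qed

lemma tuple_act_eq_tuple_del:
  assumes "\<And>y. y \<in> set (take (i - 1) xs) \<Longrightarrow> op y (xs ! (i - 1)) = y"
  shows "tuple_act op i xs = tuple_del i xs"
  using assms by (auto simp: tuple_act_def tuple_del_def intro!: map_idI)

lemma tuple_bd_gen_eq_0:
  assumes "\<And>i. 2 \<le> i \<Longrightarrow> i \<le> length xs \<Longrightarrow> tuple_act op i xs = tuple_del i xs"
  shows "tuple_bd_gen op xs = 0"
  using assms by (auto simp: tuple_bd_gen_def intro!: sum.neutral)

lemma tuple_bd_gen_replicate:
  assumes "op a a = a"
  shows "tuple_bd_gen op (replicate m a) = 0"
  using assms by (intro tuple_bd_gen_eq_0 tuple_act_eq_tuple_del) (auto dest: in_set_takeD)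

lemma tuple_bd_gen_trivial_quandle:
  assumes "\<forall>x\<in>S. \<forall>y\<in>S. op x y = x" "set xs \<subseteq> S"
  shows "tuple_bd_gen op xs = 0"
proof (intro tuple_bd_gen_eq_0 tuple_act_eq_tuple_del)
  fix i y assume "2 \<le> i" "i \<le> length xs" "y \<in> set (take (i - 1) xs)"
  then have "y \<in> S" "xs ! (i - 1) \<in> S"
    using assms(2) nth_mem[of "i - 1" xs] by (auto dest: in_set_takeD)
  then show "op y (xs ! (i - 1)) = y" using assms(1) by blast
qed

lemma tuple_bd_gen_short: "length xs \<le> 1 \<Longrightarrow> tuple_bd_gen op xs = 0"
  by (simp add: tuple_bd_gen_def)

lemma tuple_bd_eq_0:
  assumes "\<And>xs. xs \<in> S \<Longrightarrow> tuple_bd_gen op xs = 0" "a \<in> carrier (free_Abelian_group S)"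
  shows "tuple_bd op a = 0"
  using assms unfolding tuple_bd_def by (intro frag_extend_eq_0) auto

lemma bdQ_eq_one:
  assumes "\<And>a. a \<in> carrier (chainR gens (Suc k)) \<Longrightarrow> tuple_bd op a = 0"
    and "A \<in> carrier (chainQ gens (Suc k))"
  shows "bdQ gens op (Suc k) A = \<one>\<^bsub>chainQ gens k\<^esub>"
proof -
  obtain x where x: "x \<in> carrier (chainR gens (Suc k))"
    and A: "A = carrier (chainD gens (Suc k)) #>\<^bsub>chainR gens (Suc k)\<^esub> x"
    using assms(2) by (auto simp: chainQ_def FactGroup_def RCOSETS_def)
  have "A \<subseteq> carrier (chainR gens (Suc k))"
    using monoid.r_coset_subset_G[OF group.is_monoid[OF group_chainR]
        subgroup.subset[OF subgroup_chainD] x]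
    by (simp add: A)
  moreover have "x \<in> A"
    using group.rcos_self[OF group_chainR x subgroup_chainD] by (simp add: A)
  then have "(SOME a. a \<in> A) \<in> A" by (rule someI)
  ultimately have "tuple_bd op (SOME a. a \<in> A) = 0" using assms(1) by blast
  then show ?thesis
    by (simp add: bdQ_def chainQ_def r_coset_def chainR_def)
qed

lemma zero_differential_tuple_complexes:
  assumes "\<forall>n. \<forall>xs\<in>gens n. tuple_bd_gen op xs = 0"
  shows "zero_differential (chainR gens) (\<lambda>_. tuple_bd op)"
    and "zero_differential (chainD gens) (\<lambda>_. tuple_bd op)"
    and "zero_differential (chainQ gens) (bdQ gens op)"
proof -
  have bd: "tuple_bd op a = 0" if "a \<in> carrier (chainR gens n)" for n a
    using assms that by (intro tuple_bd_eq_0[of "gens n"]) (auto simp: chainR_def)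
  then have bdD: "tuple_bd op a = 0" if "a \<in> carrier (chainD gens n)" for n a
    using subgroup.subset[OF subgroup_chainD] that by blast
  show "zero_differential (chainR gens) (\<lambda>_. tuple_bd op)"
    using bd by (simp add: zero_differential_def)
  show "zero_differential (chainD gens) (\<lambda>_. tuple_bd op)"
    using bdD by (simp add: zero_differential_def)
  show "zero_differential (chainQ gens) (bdQ gens op)"
    using bdQ_eq_one[OF bd] by (simp add: zero_differential_def)
qed

lemma cohom_equals_cochains_tuple_complexes:
  assumes "\<forall>n. \<forall>xs\<in>gens n. tuple_bd_gen op xs = 0"
  shows "cohom_equals_cochains (chainR gens) (\<lambda>_. tuple_bd op) n"
    and "cohom_equals_cochains (chainD gens) (\<lambda>_. tuple_bd op) n"
    and "cohom_equals_cochains (chainQ gens) (bdQ gens op) n"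
  using zero_differential_tuple_complexes[OF assms]
  by (auto intro: cohom_equals_cochains_if_zero_differential group_chainR group_chainD group_chainQ)

lemma cohomology_shift_tuple_complexes:
  assumes "\<And>xs. xs \<in> gens 1 \<Longrightarrow> length xs \<le> 1"
  shows "cohomology (chainR (\<lambda>n. gens (Suc n))) (\<lambda>_. tuple_bd op) n
           = cohomology (chainR gens) (\<lambda>_. tuple_bd op) (Suc n)"
    and "cohomology (chainD (\<lambda>n. gens (Suc n))) (\<lambda>_. tuple_bd op) n
           = cohomology (chainD gens) (\<lambda>_. tuple_bd op) (Suc n)"
    and "cohomology (chainQ (\<lambda>n. gens (Suc n))) (bdQ (\<lambda>n. gens (Suc n)) op) n
           = cohomology (chainQ gens) (bdQ gens op) (Suc n)"
proof -
  have bd: "tuple_bd op a = 0" if "a \<in> carrier (chainR gens (Suc 0))" for a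
    using assms that
    by (intro tuple_bd_eq_0[of "gens 1"]) (auto simp: tuple_bd_gen_short chainR_def)
  then have bdD: "tuple_bd op a = 0" if "a \<in> carrier (chainD gens (Suc 0))" for a
    using subgroup.subset[OF subgroup_chainD] that by blast
  have "coboundaries (chainR gens) (\<lambda>_. tuple_bd op) 1 = {\<lambda>x. 0}"
    using coboundaries_Suc_trivial[of "chainR gens" 0] bd by (simp add: group_chainR)
  then show "cohomology (chainR (\<lambda>n. gens (Suc n))) (\<lambda>_. tuple_bd op) n
          = cohomology (chainR gens) (\<lambda>_. tuple_bd op) (Suc n)"
    by (intro cohomology_shift) (simp_all add: chainR_def)
  have "coboundaries (chainD gens) (\<lambda>_. tuple_bd op) 1 = {\<lambda>x. 0}"
    using coboundaries_Suc_trivial[of "chainD gens" 0] bdD by (simp add: group_chainD)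
  then show "cohomology (chainD (\<lambda>n. gens (Suc n))) (\<lambda>_. tuple_bd op) n
          = cohomology (chainD gens) (\<lambda>_. tuple_bd op) (Suc n)"
    by (intro cohomology_shift) (simp_all add: chainD_def)
  have "coboundaries (chainQ gens) (bdQ gens op) 1 = {\<lambda>x. 0}"
    using coboundaries_Suc_trivial[of "chainQ gens" 0] bdQ_eq_one[OF bd, of _ 0]
    by (simp add: group_chainQ)
  moreover have "bdQ (\<lambda>n. gens (Suc n)) op k = bdQ gens op (Suc k)" if "k \<ge> 1" for k
    using that by (simp add: bdQ_def chainR_def chainD_def fun_eq_iff)
  ultimately show "cohomology (chainQ (\<lambda>n. gens (Suc n))) (bdQ (\<lambda>n. gens (Suc n)) op) n
          = cohomology (chainQ gens) (bdQ gens op) (Suc n)"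
    by (intro cohomology_shift) (simp_all add: chainQ_def chainR_def chainD_def)
qed

lemma cohomology_chainQ_iso_chainR_0:
  assumes "\<forall>n. \<forall>xs\<in>gens n. tuple_bd_gen op xs = 0"
    and "gens 0 \<inter> {xs. degenerate_tuple xs} = {}"
  shows "cohomology (chainQ gens) (bdQ gens op) 0
           \<cong> cohomology (chainR gens) (\<lambda>_. tuple_bd op) 0"
proof -
  note cohom_iso =
    cohom_equals_cochains_tuple_complexes[OF assms(1), unfolded cohom_equals_cochains_def]
  have "cohomology (chainQ gens) (bdQ gens op) 0 \<cong> cochain_group (chainQ gens 0)"
    by (rule group.iso_sym[OF group_cochain_group is_isoI[OF cohom_iso(3)]])
  also have "\<dots> \<cong> cochain_group (chainR gens 0)"
    using group.iso_sym[OF group_chainQ chainQ_iso_chainR[of gens 0, OF assms(2)]]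
    by (rule cochain_group_iso[OF group_chainR group_chainQ])
  also have "\<dots> \<cong> cohomology (chainR gens) (\<lambda>_. tuple_bd op) 0"
    by (rule is_isoI[OF cohom_iso(1)])
  finally show ?thesis .
qed

lemma degenerate_tuple_replicate: "2 \<le> m \<Longrightarrow> degenerate_tuple (replicate m a)"
  by (auto simp: degenerate_tuple_def intro!: exI[of _ 0])

lemma length_ge_2_if_degenerate_tuple: "degenerate_tuple xs \<Longrightarrow> 2 \<le> length xs"
  by (auto simp: degenerate_tuple_def)

lemma simplex_vertex_tuples_subset: "simplex_vertex_tuples X n \<subseteq> R_gens X (Suc n)"
proof
  fix xs assume "xs \<in> simplex_vertex_tuples X n"
  then obtain \<sigma> where \<sigma>: "singular_simplex n X \<sigma>"
    and xs: "xs = map (\<lambda>i. \<sigma> (\<lambda>j. if j = i then 1 else 0)) [0..<Suc n]"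
    by (auto simp: simplex_vertex_tuples_def)
  have "\<sigma> (\<lambda>j. if j = i then 1 else 0) \<in> topspace X" if "i \<le> n" for i
    using \<sigma> that by (auto simp: singular_simplex_def continuous_map_def Pi_iff)
  then show "xs \<in> R_gens X (Suc n)"
    by (auto simp: xs R_gens_def)
qed

lemma simplex_vertex_tuples_discrete:
  assumes "X = discrete_topology (topspace X)" "xs \<in> simplex_vertex_tuples X n"
  obtains a where "a \<in> topspace X" "xs = replicate (Suc n) a"
proof -
  obtain \<sigma> where \<sigma>: "singular_simplex n X \<sigma>"
    and xs: "xs = map (\<lambda>i. \<sigma> (\<lambda>j. if j = i then 1 else 0)) [0..<Suc n]"
    using assms(2) by (auto simp: simplex_vertex_tuples_def)
  have "connectedin X (\<sigma> ` standard_simplex n)"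
    using \<sigma> connectedin_continuous_map_image connectedin_standard_simplex
    by (fastforce simp: singular_simplex_def connectedin_subtopology)
  then obtain a where a: "\<sigma> ` standard_simplex n \<subseteq> {a}"
    using assms(1) connectedin_discrete_topology by metis
  then have "\<sigma> (\<lambda>j. if j = i then 1 else 0) = a" if "i \<le> n" for i
    using that basis_in_standard_simplex[of i n] by blast
  then have "xs = map (\<lambda>i. a) [0..<Suc n]"
    by (auto simp: xs)
  then have "xs = replicate (Suc n) a"
    by (simp add: map_replicate_const)
  moreover have "a \<in> topspace X"
    using simplex_vertex_tuples_subset[of X n] assms(2) calculation by (auto simp: R_gens_def)
  ultimately show ?thesis using that by blast
qed

lemma continuous_map_into_indiscrete:
  assumes "\<forall>S. openin Y S \<longleftrightarrow> S = {} \<or> S = topspace Y" "f \<in> topspace X \<rightarrow> topspace Y"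
  shows "continuous_map X Y f"
  unfolding continuous_map_def
proof (intro conjI allI impI)
  fix U assume "openin Y U"
  then have "U = {} \<or> U = topspace Y" using assms(1) by blast
  then have "{x \<in> topspace X. f x \<in> U} = {} \<or> {x \<in> topspace X. f x \<in> U} = topspace X"
    using assms(2) by auto
  then show "openin X {x \<in> topspace X. f x \<in> U}" by (metis openin_empty openin_topspace)
qed (fact assms(2))

lemma Least_nonzero_le_standard_simplex:
  assumes "t \<in> standard_simplex n"
  shows "(LEAST i. t i \<noteq> 0) \<le> n"
proof -
  have "\<exists>i\<le>n. t i \<noteq> 0"
  proof (rule ccontr)
    assume "\<not> ?thesis"
    then have "(\<Sum>i\<le>n. t i) = 0" by simp
    with assms show False by (simp add: standard_simplex_def)
  qed
  then show ?thesis by (meson Least_le order_trans)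
qed

lemma simplex_vertex_tuples_indiscrete:
  assumes "\<forall>S. openin X S \<longleftrightarrow> S = {} \<or> S = topspace X"
  shows "simplex_vertex_tuples X n = R_gens X (Suc n)"
proof
  show "R_gens X (Suc n) \<subseteq> simplex_vertex_tuples X n"
  proof
    fix xs assume xs: "xs \<in> R_gens X (Suc n)"
    define \<sigma> where "\<sigma> = (\<lambda>t\<in>standard_simplex n. xs ! (LEAST i. t i \<noteq> 0))"
    have "\<sigma> \<in> standard_simplex n \<rightarrow> topspace X"
      using xs Least_nonzero_le_standard_simplex by (fastforce simp: \<sigma>_def R_gens_def)
    then have "singular_simplex n X \<sigma>"
      using assms by (simp add: singular_simplex_def \<sigma>_def continuous_map_into_indiscrete)
    moreover have "\<sigma> (\<lambda>j. if j = i then 1 else 0) = xs ! i" if "i \<le> n" for i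
    proof -
      have "(LEAST j. (if j = i then 1 else 0 :: real) \<noteq> 0) = i"
        by (rule Least_equality) (auto split: if_splits)
      then show ?thesis
        using that by (simp only: \<sigma>_def restrict_apply' basis_in_standard_simplex)
    qed
    then have "map (\<lambda>i. \<sigma> (\<lambda>j. if j = i then 1 else 0)) [0..<Suc n] = xs"
      using xs by (intro nth_equalityI) (auto simp: R_gens_def simp del: upt_Suc)
    ultimately show "xs \<in> simplex_vertex_tuples X n"
      unfolding simplex_vertex_tuples_def by blast
  qed
qed (rule simplex_vertex_tuples_subset)

lemma bar_cohomology_discrete:
  assumes "X = discrete_topology (topspace X)" and "\<forall>x\<in>topspace X. op x x = x"
  shows "n \<ge> 1 \<Longrightarrow> trivial_group (barHQ X op n)"
    and "cohom_equals_cochains (barCR X) (\<lambda>_. tuple_bd op) n"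
    and "cohom_equals_cochains (barCD X) (\<lambda>_. tuple_bd op) n"
    and "barHQ X op 0 \<cong> barHR X op 0"
proof -
  have vertex_tuple_const: "\<exists>a\<in>topspace X. xs = replicate (Suc n) a"
    if "xs \<in> barR_gens X n" for n xs
    by (rule simplex_vertex_tuples_discrete[OF assms(1) that[unfolded barR_gens_def]]) blast
  have bd: "\<forall>n. \<forall>xs\<in>barR_gens X n. tuple_bd_gen op xs = 0"
  proof (intro allI ballI)
    fix n xs assume "xs \<in> barR_gens X n"
    then obtain a where "a \<in> topspace X" "xs = replicate (Suc n) a"
      using vertex_tuple_const by blast
    then show "tuple_bd_gen op xs = 0"
      using assms(2) tuple_bd_gen_replicate[of op a "Suc n"] by simp
  qed
  show "cohom_equals_cochains (barCR X) (\<lambda>_. tuple_bd op) n"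
    and "cohom_equals_cochains (barCD X) (\<lambda>_. tuple_bd op) n"
    using cohom_equals_cochains_tuple_complexes(1,2)[OF bd] .
  show "trivial_group (barHQ X op n)" if "n \<ge> 1"
  proof -
    have "barR_gens X n \<subseteq> {xs. degenerate_tuple xs}"
    proof
      fix xs assume "xs \<in> barR_gens X n"
      with vertex_tuple_const obtain a where "xs = replicate (Suc n) a" by blast
      then show "xs \<in> {xs. degenerate_tuple xs}"
        using degenerate_tuple_replicate[of "Suc n" a] that by simp
    qed
    then show ?thesis
      unfolding barHQ_def
      by (intro trivial_cohomology_if_zero_differential group_chainQ trivial_group_chainQ
          zero_differential_tuple_complexes(3)[OF bd])
  qed
  have "barR_gens X 0 \<inter> {xs. degenerate_tuple xs} = {}"
  proof (rule equals0I)
    fix xs assume xs: "xs \<in> barR_gens X 0 \<inter> {xs. degenerate_tuple xs}"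
    then have "length xs = 1"
      using simplex_vertex_tuples_subset[of X 0] by (auto simp: barR_gens_def R_gens_def)
    with xs show False
      using length_ge_2_if_degenerate_tuple[of xs] by simp
  qed
  then show "barHQ X op 0 \<cong> barHR X op 0"
    unfolding barHQ_def barHR_def by (rule cohomology_chainQ_iso_chainR_0[OF bd])
qed

lemma bar_cohomology_indiscrete:
  assumes "\<forall>S. openin X S \<longleftrightarrow> S = {} \<or> S = topspace X"
  shows "barHR X op n \<cong> HR X op (Suc n)"
    and "barHD X op n \<cong> HD X op (Suc n)"
    and "barHQ X op n \<cong> HQ X op (Suc n)"
proof -
  have gens: "barR_gens X = (\<lambda>n. R_gens X (Suc n))"
    using simplex_vertex_tuples_indiscrete[OF assms] by (simp add: barR_gens_def fun_eq_iff)
  have "\<And>xs. xs \<in> R_gens X 1 \<Longrightarrow> length xs \<le> 1"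
    by (simp add: R_gens_def)
  note shift = cohomology_shift_tuple_complexes[where gens = "R_gens X", OF this]
  show "barHR X op n \<cong> HR X op (Suc n)"
    using shift(1) by (simp add: barHR_def HR_def gens)
  show "barHD X op n \<cong> HD X op (Suc n)"
    using shift(2) by (simp add: barHD_def HD_def gens)
  show "barHQ X op n \<cong> HQ X op (Suc n)"
    using shift(3) by (simp add: barHQ_def HQ_def gens)
qed

lemma bar_cohomology_trivial_quandle:
  assumes "\<forall>x\<in>topspace X. \<forall>y\<in>topspace X. op x y = x"
  shows "cohom_equals_cochains (barCR X) (\<lambda>_. tuple_bd op) n"
    and "cohom_equals_cochains (barCD X) (\<lambda>_. tuple_bd op) n"
    and "cohom_equals_cochains (barCQ X) (bdQ (barR_gens X) op) n"
proof -
  have bd: "\<forall>k. \<forall>xs\<in>barR_gens X k. tuple_bd_gen op xs = 0"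
  proof (intro allI ballI tuple_bd_gen_trivial_quandle[OF assms])
    fix k xs assume "xs \<in> barR_gens X k"
    then show "set xs \<subseteq> topspace X"
      using simplex_vertex_tuples_subset[of X k] by (auto simp: barR_gens_def R_gens_def)
  qed
  show "cohom_equals_cochains (barCR X) (\<lambda>_. tuple_bd op) n"
    and "cohom_equals_cochains (barCD X) (\<lambda>_. tuple_bd op) n"
    and "cohom_equals_cochains (barCQ X) (bdQ (barR_gens X) op) n"
    using cohom_equals_cochains_tuple_complexes[OF bd] .
qed

theorem mainTheorem11:
  fixes X :: "'a topology" and op :: "'a \<Rightarrow> 'a \<Rightarrow> 'a"
  assumes "topological_quandle X op"
  shows
   "(X = discrete_topology (topspace X) \<longrightarrow>
       (\<forall>n\<ge>1. trivial_group (barHQ X op n)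
              \<and> cohom_equals_cochains (barCR X) (\<lambda>_. tuple_bd op) n
              \<and> cohom_equals_cochains (barCD X) (\<lambda>_. tuple_bd op) n)
       \<and> barHQ X op 0 \<cong> barHR X op 0
       \<and> cohom_equals_cochains (barCR X) (\<lambda>_. tuple_bd op) 0)
    \<and> ((\<forall>S. openin X S \<longleftrightarrow> S = {} \<or> S = topspace X) \<longrightarrow>
       (\<forall>n. barHR X op n \<cong> HR X op (Suc n)
          \<and> barHD X op n \<cong> HD X op (Suc n)
          \<and> barHQ X op n \<cong> HQ X op (Suc n)))
    \<and> ((\<forall>x\<in>topspace X. \<forall>y\<in>topspace X. op x y = x) \<longrightarrow>
       (\<forall>n. cohom_equals_cochains (barCR X) (\<lambda>_. tuple_bd op) n
          \<and> cohom_equals_cochains (barCD X) (\<lambda>_. tuple_bd op) n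
          \<and> cohom_equals_cochains (barCQ X) (bdQ (barR_gens X) op) n))"
proof (intro conjI impI)
  have idem: "\<forall>x\<in>topspace X. op x x = x"
    using assms by (simp add: topological_quandle_def quandle_def)
  assume "X = discrete_topology (topspace X)"
  note discrete = bar_cohomology_discrete[of X op, OF this idem]
  show "\<forall>n\<ge>1. trivial_group (barHQ X op n)
              \<and> cohom_equals_cochains (barCR X) (\<lambda>_. tuple_bd op) n
              \<and> cohom_equals_cochains (barCD X) (\<lambda>_. tuple_bd op) n"
    by (simp add: discrete)
  show "barHQ X op 0 \<cong> barHR X op 0"
    by (rule discrete(4))
  show "cohom_equals_cochains (barCR X) (\<lambda>_. tuple_bd op) 0"
    by (rule discrete(2))
next
  assume "\<forall>S. openin X S \<longleftrightarrow> S = {} \<or> S = topspace X"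
  then show "\<forall>n. barHR X op n \<cong> HR X op (Suc n)
          \<and> barHD X op n \<cong> HD X op (Suc n)
          \<and> barHQ X op n \<cong> HQ X op (Suc n)"
    by (simp add: bar_cohomology_indiscrete)
next
  assume "\<forall>x\<in>topspace X. \<forall>y\<in>topspace X. op x y = x"
  then show "\<forall>n. cohom_equals_cochains (barCR X) (\<lambda>_. tuple_bd op) n
          \<and> cohom_equals_cochains (barCD X) (\<lambda>_. tuple_bd op) n
          \<and> cohom_equals_cochains (barCQ X) (bdQ (barR_gens X) op) n"
    by (simp add: bar_cohomology_trivial_quandle)
qed

end
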